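(* For every integer $n \ge 9$ of the form $n = 5k + 4$ with $k$ a positive integer, we have $\mathbf{max\mbox{-}diam}(n, 2) \ge 4^{(n - 4)/5}$.
   Context: A partial DFA is a triple $\mathcal{A} = (Q, \Sigma, \delta)$ with $Q$ a finite set of states, $\Sigma$ a finite alphabet, and $\delta \colon Q \times \Sigma \rightharpoonup Q$ a partial transition function, extended to words in the usual way. Each word $w \in \Sigma^*$ expresses the partial transformation $q \mapsto \delta(q, w)$ of $Q$ (undefined where $\delta(q,w)$ is undefined). The depth of a partial transformation $f$ expressed by some word is the length of a shortest word expressing $f$. The diameter of $\mathcal{A}$ is the maximum depth over all partial transformations of $Q$ expressed by some word in $\mathcal{A}$ (equivalently, the smallest $\ell \ge 0$ such that every transformation expressed by a word is expressed by a word of length at most $\ell$). $\mathbf{max\mbox{-}diam}(n, m)$ denotes the maximum diameter over all partial DFAs with $n$ states and $m$ letters. *)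

theory Defs
  imports Complex_Main
begin

text \<open>A partial DFA with n states and m letters: states are 0..<n, letters 0..<m,
  and the partial transition function is delta :: state => letter => state option.\<close>

type_synonym pdfa = "nat \<Rightarrow> nat \<Rightarrow> nat option"

definition wf_pdfa :: "nat \<Rightarrow> nat \<Rightarrow> pdfa \<Rightarrow> bool" where
  "wf_pdfa n m \<delta> \<longleftrightarrow>
     (\<forall>q a. (q < n \<and> a < m \<longrightarrow> (\<forall>p. \<delta> q a = Some p \<longrightarrow> p < n))
          \<and> (\<not> (q < n \<and> a < m) \<longrightarrow> \<delta> q a = None))"

fun delta_word :: "pdfa \<Rightarrow> nat \<Rightarrow> nat list \<Rightarrow> nat option" where
  "delta_word \<delta> q [] = Some q"
| "delta_word \<delta> q (a # w) = (case \<delta> q a of None \<Rightarrow> None | Some p \<Rightarrow> delta_word \<delta> p w)"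

definition expressed :: "nat \<Rightarrow> pdfa \<Rightarrow> nat list \<Rightarrow> (nat \<Rightarrow> nat option)" where
  "expressed n \<delta> w = (\<lambda>q. if q < n then delta_word \<delta> q w else None)"

definition words :: "nat \<Rightarrow> nat list set" where
  "words m = {w. set w \<subseteq> {..<m}}"

definition transformations :: "nat \<Rightarrow> nat \<Rightarrow> pdfa \<Rightarrow> (nat \<Rightarrow> nat option) set" where
  "transformations n m \<delta> = expressed n \<delta> ` words m"

definition depth :: "nat \<Rightarrow> nat \<Rightarrow> pdfa \<Rightarrow> (nat \<Rightarrow> nat option) \<Rightarrow> nat" where
  "depth n m \<delta> f = (LEAST l. \<exists>w \<in> words m. length w = l \<and> expressed n \<delta> w = f)"

definition diameter :: "nat \<Rightarrow> nat \<Rightarrow> pdfa \<Rightarrow> nat" where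
  "diameter n m \<delta> = Max (depth n m \<delta> ` transformations n m \<delta>)"

definition max_diam :: "nat \<Rightarrow> nat \<Rightarrow> nat" where
  "max_diam n m = Max {diameter n m \<delta> | \<delta>. wf_pdfa n m \<delta>}"

end

theory Submission
  imports Defs
begin

text \<open>
  For \<open>k \<ge> 2\<close> put \<open>L = k + 1\<close> cells on a cycle, each holding a base-4 digit. Letter 0
  rotates the cells; letter 1 increments the digit in cell 0, turns the overflow digit 4 in
  cell 1 back into 0, fixes all other cells, and is undefined on the digits 0 to 3 of cell 1.
  Let \<open>k\<close> tokens occupy consecutive cells. When letter 1 increments the digit of token \<open>\<rho>\<close>,
  token \<open>\<rho> - 1\<close> must have overflowed and drops from 4 to 0; this trades \<open>4 * 4^(\<rho> - 1)\<close>
  for \<open>4^\<rho>\<close>, so every letter 1 raises the counter value \<open>\<Sum>j<k. d\<^sub>j * 4^j\<close> by at most one.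
  Hence a word that drives all digits from 0 to 3 and moves the tokens by one cell has length
  at least \<open>(4^k - 1) + 1\<close>. Such a word exists: \<open>G(i) = (10)^i 1 0^(L - i)\<close> increments
  digit \<open>i\<close> while resetting the lower digits from 3 to 0, and \<open>F(i + 1) = (F(i) G(i))^3 F(i)\<close>
  counts the digits below \<open>i + 1\<close> from 0 to 3. The automaton has \<open>4 * L + 2 \<le> 5 * k + 4\<close>
  states; for \<open>k = 1\<close> a path of 9 states, of diameter 8, suffices.
\<close>

lemma four_mul_mod_add_less:
  fixes c v L :: nat
  assumes "v < 4" "0 < L"
  shows "4 * (c mod L) + v < 4 * L"
proof -
  have "c mod L + 1 \<le> L"
    using assms(2) by (simp add: Suc_le_eq)
  then show ?thesis
    using assms(1) by linarith
qed

lemma add_diff_mod_cases: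
  fixes r L j :: nat
  assumes "j < L"
  shows "(r + L - j) mod L = (if j \<le> r mod L then r mod L - j else r mod L + L - j)"
proof -
  have "(r + L - j) mod L = (r + (L - j)) mod L"
    using assms by simp
  also have "\<dots> = (r mod L + (L - j)) mod L"
    by (simp add: mod_add_left_eq)
  also have "\<dots> = (if j \<le> r mod L then r mod L - j else r mod L + L - j)"
  proof (cases "j \<le> r mod L")
    case True
    then have "r mod L + (L - j) = (r mod L - j) + L"
      using assms by simp
    then have "(r mod L + (L - j)) mod L = ((r mod L - j) + L) mod L"
      by (rule arg_cong)
    also have "\<dots> = r mod L - j"
      using assms by (simp add: less_imp_diff_less)
    finally show ?thesis
      using True by simp
  next
    case False
    then show ?thesis
      using assms by simp
  qed
  finally show ?thesis .
qed

lemma sum_carry_le: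
  fixes f g :: "nat \<Rightarrow> nat"
  assumes same: "\<And>j. j < k \<Longrightarrow> j \<noteq> \<rho> \<Longrightarrow> Suc j \<noteq> \<rho> \<Longrightarrow> g j = f j"
    and incr: "\<rho> < k \<Longrightarrow> g \<rho> = Suc (f \<rho>)"
    and carry: "0 < \<rho> \<Longrightarrow> \<rho> - 1 < k \<Longrightarrow> f (\<rho> - 1) = 4 \<and> g (\<rho> - 1) = 0"
  shows "(\<Sum>j<k. g j * 4^j) \<le> (\<Sum>j<k. f j * 4^j) + 1"
proof -
  consider "k \<le> \<rho>" | "\<rho> = 0" "0 < k" | "0 < \<rho>" "\<rho> < k"
    by linarith
  then show ?thesis
  proof cases
    case 1
    have "g j * 4^j \<le> f j * 4^j" if "j < k" for j
      using that 1 same carry by (cases "Suc j = \<rho>") auto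
    then have "(\<Sum>j<k. g j * 4^j) \<le> (\<Sum>j<k. f j * 4^j)"
      by (intro sum_mono) simp
    then show ?thesis by simp
  next
    case 2
    let ?A = "{..<k} - {0}"
    have "(\<Sum>j\<in>?A. g j * 4^j) = (\<Sum>j\<in>?A. f j * 4^j)"
      using same 2 by (intro sum.cong) auto
    moreover have "(\<Sum>j<k. h j * 4^j) = h 0 + (\<Sum>j\<in>?A. h j * 4^j)" for h :: "nat \<Rightarrow> nat"
      using 2 by (simp add: sum.remove)
    ultimately show ?thesis
      using incr 2 by simp
  next
    case 3
    let ?A = "{..<k} - {\<rho>} - {\<rho> - 1}"
    have "\<rho> - 1 \<in> {..<k} - {\<rho>}"
      using 3 by auto
    then have "(\<Sum>j<k. h j * 4^j) = h \<rho> * 4^\<rho> + (h (\<rho> - 1) * 4^(\<rho> - 1) + (\<Sum>j\<in>?A. h j * 4^j))"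
      for h :: "nat \<Rightarrow> nat"
      using 3 by (simp add: sum.remove)
    moreover have "(\<Sum>j\<in>?A. g j * 4^j) = (\<Sum>j\<in>?A. f j * 4^j)"
      using same by (intro sum.cong) auto
    moreover have "4 * 4^(\<rho> - 1) = (4::nat)^\<rho>"
      using 3 by (simp flip: power_Suc)
    ultimately show ?thesis
      using incr carry 3 by simp
  qed
qed

lemma sum_three_mul_four_pow: "(\<Sum>j<k. 3 * 4^j) + 1 = (4::nat)^k"
  by (induction k) auto

lemma finite_maps_dom_ran_subset:
  assumes "finite A" "finite B"
  shows "finite {f. dom f \<subseteq> A \<and> ran f \<subseteq> B}"
proof -
  have "{f. dom f \<subseteq> A \<and> ran f \<subseteq> B} = (\<Union>A'\<in>Pow A. {f. dom f = A' \<and> ran f \<subseteq> B})"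
    by auto
  then show ?thesis
    using assms by (auto intro!: finite_set_of_finite_maps dest: finite_subset)
qed

lemma wf_pdfa_SomeD:
  assumes "wf_pdfa n m \<delta>" "\<delta> q a = Some p"
  shows "q < n \<and> a < m \<and> p < n"
  using assms unfolding wf_pdfa_def by (metis option.distinct(1))

lemma finite_wf_pdfa: "finite {\<delta>. wf_pdfa n m \<delta>}"
proof -
  let ?G = "{g. dom g \<subseteq> {..<n} \<times> {..<m} \<and> ran g \<subseteq> {..<n}}"
  have G: "case_prod \<delta> \<in> ?G" if "wf_pdfa n m \<delta>" for \<delta>
  proof -
    have "dom (case_prod \<delta>) \<subseteq> {..<n} \<times> {..<m}"
      using wf_pdfa_SomeD[OF that] by (auto simp: dom_def)
    moreover have "ran (case_prod \<delta>) \<subseteq> {..<n}"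
      using wf_pdfa_SomeD[OF that] by (auto simp: ran_def)
    ultimately show ?thesis by simp
  qed
  have "{\<delta>. wf_pdfa n m \<delta>} \<subseteq> curry ` ?G"
  proof
    fix \<delta> assume "\<delta> \<in> {\<delta>. wf_pdfa n m \<delta>}"
    then have "case_prod \<delta> \<in> ?G" by (intro G) simp
    then show "\<delta> \<in> curry ` ?G"
      by (rule rev_image_eqI) simp
  qed
  moreover have "finite ?G"
    by (intro finite_maps_dom_ran_subset) simp_all
  ultimately show ?thesis
    by (rule finite_subset[OF _ finite_imageI])
qed

lemma delta_word_append:
  "delta_word \<delta> q u = Some p \<Longrightarrow> delta_word \<delta> q (u @ v) = delta_word \<delta> p v"
  by (induction u arbitrary: q) (auto split: option.splits)

lemma delta_word_less:
  assumes "wf_pdfa n m \<delta>" "q < n" "delta_word \<delta> q w = Some p"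
  shows "p < n"
  using assms(2,3)
proof (induction w arbitrary: q)
  case (Cons a w)
  then obtain r where "\<delta> q a = Some r" "delta_word \<delta> r w = Some p"
    by (auto split: option.splits)
  moreover from this have "r < n"
    using wf_pdfa_SomeD[OF assms(1)] by blast
  ultimately show ?case
    using Cons.IH by blast
qed simp

lemma finite_transformations:
  assumes "wf_pdfa n m \<delta>"
  shows "finite (transformations n m \<delta>)"
proof -
  have "transformations n m \<delta> \<subseteq> {f. dom f \<subseteq> {..<n} \<and> ran f \<subseteq> {..<n}}"
    using delta_word_less[OF assms]
    unfolding transformations_def expressed_def dom_def ran_def
    by (auto split: if_splits)
  then show ?thesis
    using finite_maps_dom_ran_subset[of "{..<n}" "{..<n}"] finite_subset by blast
qed

lemma depth_le_max_diam:
  assumes "wf_pdfa n m \<delta>" "w \<in> words m"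
  shows "depth n m \<delta> (expressed n \<delta> w) \<le> max_diam n m"
proof -
  have "depth n m \<delta> (expressed n \<delta> w) \<le> diameter n m \<delta>"
    unfolding diameter_def using finite_transformations[OF assms(1)] assms(2)
    by (intro Max_ge) (auto simp: transformations_def)
  also have "\<dots> \<le> max_diam n m"
    unfolding max_diam_def
  proof (rule Max_ge)
    have "{diameter n m \<delta> | \<delta>. wf_pdfa n m \<delta>} = diameter n m ` {\<delta>. wf_pdfa n m \<delta>}"
      by auto
    then show "finite {diameter n m \<delta> | \<delta>. wf_pdfa n m \<delta>}"
      using finite_wf_pdfa by simp
  qed (use assms(1) in auto)
  finally show ?thesis .
qed

lemma le_depth_expressed:
  assumes "W \<in> words m"
    and "\<And>w. w \<in> words m \<Longrightarrow> expressed n \<delta> w = expressed n \<delta> W \<Longrightarrow> B \<le> length w"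
  shows "B \<le> depth n m \<delta> (expressed n \<delta> W)"
proof -
  let ?P = "\<lambda>l. \<exists>w \<in> words m. length w = l \<and> expressed n \<delta> w = expressed n \<delta> W"
  have "?P (Least ?P)"
    using assms(1) by (intro LeastI[of ?P "length W"]) auto
  then show ?thesis
    unfolding depth_def using assms(2) by fastforce
qed

definition moves :: "pdfa \<Rightarrow> nat list \<Rightarrow> nat \<Rightarrow> (nat \<Rightarrow> nat) \<Rightarrow> (nat \<Rightarrow> nat) \<Rightarrow> bool" where
  "moves \<delta> w k s t \<longleftrightarrow> (\<forall>j<k. delta_word \<delta> (s j) w = Some (t j))"

lemma moves_append: "moves \<delta> u k s s' \<Longrightarrow> moves \<delta> v k s' t \<Longrightarrow> moves \<delta> (u @ v) k s t"
  unfolding moves_def by (simp add: delta_word_append)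

lemma le_max_diam_if_moves:
  assumes "wf_pdfa n m \<delta>" "W \<in> words m" "\<And>j. j < k \<Longrightarrow> s j < n" "moves \<delta> W k s t"
    and "\<And>w. w \<in> words m \<Longrightarrow> moves \<delta> w k s t \<Longrightarrow> B \<le> length w"
  shows "B \<le> max_diam n m"
proof -
  have "B \<le> depth n m \<delta> (expressed n \<delta> W)"
  proof (rule le_depth_expressed[OF assms(2)])
    fix w assume "w \<in> words m" "expressed n \<delta> w = expressed n \<delta> W"
    then have "moves \<delta> w k s t"
      using assms(3,4) unfolding moves_def expressed_def by (metis (full_types))
    then show "B \<le> length w"
      using assms(5) \<open>w \<in> words m\<close> by blast
  qed
  then show ?thesis
    using depth_le_max_diam[OF assms(1,2)] by linarith
qed

definition chain_pdfa :: "nat \<Rightarrow> pdfa" where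
  "chain_pdfa n q a = (if a = 0 \<and> Suc q < n then Some (Suc q) else None)"

lemma delta_word_chain_pdfa:
  "delta_word (chain_pdfa n) q w = Some p \<Longrightarrow> p = q + length w"
  by (induction w arbitrary: q) (fastforce simp: chain_pdfa_def split: if_splits)+

lemma delta_word_chain_pdfa_replicate:
  "q + l < n \<Longrightarrow> delta_word (chain_pdfa n) q (replicate l 0) = Some (q + l)"
  by (induction l arbitrary: q) (auto simp: chain_pdfa_def)

lemma pred_le_max_diam:
  assumes "0 < m"
  shows "n - 1 \<le> max_diam n m"
proof (cases "n = 0")
  case False
  show ?thesis
  proof (rule le_max_diam_if_moves)
    show "wf_pdfa n m (chain_pdfa n)"
      using assms unfolding wf_pdfa_def chain_pdfa_def by auto
    show "replicate (n - 1) 0 \<in> words m"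
      using assms unfolding words_def by auto
    show "moves (chain_pdfa n) (replicate (n - 1) 0) 1 (\<lambda>_. 0) (\<lambda>_. n - 1)"
      unfolding moves_def using False delta_word_chain_pdfa_replicate[of 0 "n - 1" n] by simp
    show "n - 1 \<le> length w" if "moves (chain_pdfa n) w 1 (\<lambda>_. 0) (\<lambda>_. n - 1)" for w
      using that delta_word_chain_pdfa unfolding moves_def by fastforce
  qed (use False in simp)
qed simp

text \<open>State \<open>4 * c + v\<close> (\<open>c < L\<close>, \<open>v < 4\<close>) holds digit \<open>v\<close> in cell \<open>c\<close>; the states \<open>4 * L\<close>
  and \<open>4 * L + 1\<close> hold the overflow digit 4 in cells 0 and 1.\<close>

definition counter_pdfa :: "nat \<Rightarrow> pdfa" where
  "counter_pdfa L q a =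
    (if a = 0 then
       (if q < 4 * L then Some (4 * ((q div 4 + 1) mod L) + q mod 4)
        else if q = 4 * L then Some (4 * L + 1) else None)
     else if a = 1 then
       (if q < 3 then Some (q + 1) else if q = 3 then Some (4 * L)
        else if q < 8 then None else if q < 4 * L then Some q
        else if q = 4 * L + 1 then Some 4 else None)
     else None)"

definition cell_of :: "nat \<Rightarrow> nat \<Rightarrow> nat" where
  "cell_of L q = (if q < 4 * L then q div 4 else q - 4 * L)"

definition digit_of :: "nat \<Rightarrow> nat \<Rightarrow> nat" where
  "digit_of L q = (if q < 4 * L then q mod 4 else 4)"

lemma counter_pdfa_rotate:
  "q < 4 * L \<Longrightarrow> counter_pdfa L q 0 = Some (4 * ((q div 4 + 1) mod L) + q mod 4)"
  by (simp add: counter_pdfa_def)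

lemma counter_pdfa_fix:
  "2 \<le> c \<Longrightarrow> c < L \<Longrightarrow> v < 4 \<Longrightarrow> counter_pdfa L (4 * c + v) 1 = Some (4 * c + v)"
  by (simp add: counter_pdfa_def)

lemma counter_pdfa_SomeD:
  assumes "counter_pdfa L q a = Some p" "0 < L"
  shows "q < 4 * L + 2 \<and> a < 2 \<and> p < 4 * L + 2"
proof (cases "a = 0 \<and> q < 4 * L")
  case True
  then have "p = 4 * ((q div 4 + 1) mod L) + q mod 4"
    using assms(1) counter_pdfa_rotate by simp
  moreover have "4 * ((q div 4 + 1) mod L) + q mod 4 < 4 * L"
    using assms(2) by (intro four_mul_mod_add_less) auto
  ultimately show ?thesis
    using True by simp
next
  case False
  then show ?thesis
    using assms by (auto simp: counter_pdfa_def split: if_splits)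
qed

lemma wf_counter_pdfa:
  assumes "0 < L" "4 * L + 2 \<le> n"
  shows "wf_pdfa n 2 (counter_pdfa L)"
  unfolding wf_pdfa_def
  using assms counter_pdfa_SomeD[of L] by (metis less_le_trans not_None_eq)

lemma letter0_cell_digit:
  assumes "2 \<le> L" "q < 4 * L + 2" "counter_pdfa L q 0 = Some q'"
  shows "q' < 4 * L + 2 \<and> cell_of L q' = (cell_of L q + 1) mod L \<and> digit_of L q' = digit_of L q"
proof (cases "q < 4 * L")
  case True
  then have q': "q' = 4 * ((q div 4 + 1) mod L) + q mod 4"
    using assms(3) counter_pdfa_rotate by simp
  moreover have "q' < 4 * L"
    unfolding q' using assms(1) by (intro four_mul_mod_add_less) auto
  ultimately show ?thesis
    using True unfolding cell_of_def digit_of_def by simp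
next
  case False
  then show ?thesis
    using assms unfolding cell_of_def digit_of_def
    by (auto simp: counter_pdfa_def split: if_splits)
qed

lemma letter1_cell_digit:
  assumes "2 \<le> L" "q < 4 * L + 2" "counter_pdfa L q 1 = Some q'"
  shows "q' < 4 * L + 2 \<and> cell_of L q' = cell_of L q
    \<and> (cell_of L q = 0 \<longrightarrow> digit_of L q' = digit_of L q + 1)
    \<and> (cell_of L q = 1 \<longrightarrow> digit_of L q = 4 \<and> digit_of L q' = 0)
    \<and> (2 \<le> cell_of L q \<longrightarrow> digit_of L q' = digit_of L q)"
proof (cases "8 \<le> q \<and> q < 4 * L")
  case True
  then have "q' = q" "2 \<le> q div 4"
    using assms(3) by (auto simp: counter_pdfa_def)
  then show ?thesis
    using True unfolding cell_of_def digit_of_def by auto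
next
  case False
  then show ?thesis
    using assms unfolding cell_of_def digit_of_def
    by (auto simp: counter_pdfa_def split: if_splits)
qed

text \<open>Token \<open>j\<close> lies \<open>j\<close> cells behind the current position \<open>r\<close> of token 0, where \<open>r\<close>
  counts the letters 0 read so far.\<close>

definition aligned :: "nat \<Rightarrow> nat \<Rightarrow> nat \<Rightarrow> (nat \<Rightarrow> nat) \<Rightarrow> bool" where
  "aligned L k r s \<longleftrightarrow> (\<forall>j<k. s j < 4 * L + 2 \<and> cell_of L (s j) = (r + L - j) mod L)"

definition potential :: "nat \<Rightarrow> nat \<Rightarrow> (nat \<Rightarrow> nat) \<Rightarrow> nat" where
  "potential L k s = (\<Sum>j<k. digit_of L (s j) * 4^j)"

lemma aligned_letter0:
  assumes "2 \<le> L" "k \<le> L" "aligned L k r s"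
    and "\<And>j. j < k \<Longrightarrow> counter_pdfa L (s j) 0 = Some (s' j)"
  shows "aligned L k (Suc r) s' \<and> potential L k s' = potential L k s"
proof -
  have *: "s' j < 4 * L + 2 \<and> cell_of L (s' j) = (Suc r + L - j) mod L
      \<and> digit_of L (s' j) = digit_of L (s j)" if "j < k" for j
  proof -
    have "(cell_of L (s j) + 1) mod L = Suc (r + L - j) mod L"
      using assms(3) that unfolding aligned_def by (simp add: mod_Suc_eq)
    moreover have "Suc (r + L - j) = Suc r + L - j"
      using that assms(2) by simp
    ultimately show ?thesis
      using letter0_cell_digit[OF assms(1) _ assms(4)[OF that]] assms(3) that
      unfolding aligned_def by simp
  qed
  then show ?thesis
    unfolding aligned_def potential_def by simp
qed

lemma aligned_letter1:
  assumes L: "L = k + 1" "2 \<le> k" and "aligned L k r s"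
    and "\<And>j. j < k \<Longrightarrow> counter_pdfa L (s j) 1 = Some (s' j)"
  shows "aligned L k r s' \<and> potential L k s' \<le> Suc (potential L k s)"
proof -
  define \<rho> where "\<rho> = r mod L"
  have cell: "cell_of L (s j) = (if j \<le> \<rho> then \<rho> - j else \<rho> + L - j)" if "j < k" for j
    using assms(3) that add_diff_mod_cases[of j L r] L unfolding aligned_def \<rho>_def by simp
  have step: "s' j < 4 * L + 2 \<and> cell_of L (s' j) = cell_of L (s j)
    \<and> (cell_of L (s j) = 0 \<longrightarrow> digit_of L (s' j) = digit_of L (s j) + 1)
    \<and> (cell_of L (s j) = 1 \<longrightarrow> digit_of L (s j) = 4 \<and> digit_of L (s' j) = 0)
    \<and> (2 \<le> cell_of L (s j) \<longrightarrow> digit_of L (s' j) = digit_of L (s j))" if "j < k" for j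
    using letter1_cell_digit[of L "s j" "s' j"] assms(3,4) that L unfolding aligned_def by simp
  have "potential L k s' \<le> potential L k s + 1"
    unfolding potential_def
  proof (rule sum_carry_le[where \<rho> = \<rho>])
    fix j assume "j < k" "j \<noteq> \<rho>" "Suc j \<noteq> \<rho>"
    moreover have "\<rho> < L"
      unfolding \<rho>_def using L by simp
    ultimately have "2 \<le> cell_of L (s j)"
      using cell L by auto
    then show "digit_of L (s' j) = digit_of L (s j)"
      using step \<open>j < k\<close> by simp
  next
    assume "\<rho> < k"
    then show "digit_of L (s' \<rho>) = Suc (digit_of L (s \<rho>))"
      using cell step by simp
  next
    assume "0 < \<rho>" "\<rho> - 1 < k"
    then show "digit_of L (s (\<rho> - 1)) = 4 \<and> digit_of L (s' (\<rho> - 1)) = 0"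
      using cell[of "\<rho> - 1"] step[of "\<rho> - 1"] by simp
  qed
  then show ?thesis
    using assms(3) step unfolding aligned_def by simp
qed

lemma potential_growth:
  assumes L: "L = k + 1" "2 \<le> k"
  shows "aligned L k r s \<Longrightarrow> moves (counter_pdfa L) w k s t \<Longrightarrow>
    aligned L k (r + count_list w 0) t \<and> potential L k t + count_list w 0 \<le> potential L k s + length w"
proof (induction w arbitrary: s r)
  case Nil
  then have "aligned L k r t \<and> potential L k t = potential L k s"
    unfolding aligned_def potential_def moves_def by simp
  then show ?case
    by simp
next
  case (Cons a w)
  define s' where "s' j = the (counter_pdfa L (s j) a)" for j
  have s': "counter_pdfa L (s j) a = Some (s' j) \<and> delta_word (counter_pdfa L) (s' j) w = Some (t j)"
    if "j < k" for j
    using Cons.prems(2) that unfolding moves_def s'_def by (auto split: option.splits)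
  then have "moves (counter_pdfa L) w k s' t"
    unfolding moves_def by simp
  consider "a = 0" | "a = 1" | "2 \<le> a"
    by linarith
  then show ?case
  proof cases
    case 1
    then have "aligned L k (Suc r) s' \<and> potential L k s' = potential L k s"
      using aligned_letter0[of L k r s s'] Cons.prems(1) s' L by simp
    then show ?thesis
      using Cons.IH[of "Suc r" s'] \<open>moves (counter_pdfa L) w k s' t\<close> 1 by simp
  next
    case 2
    then have "aligned L k r s' \<and> potential L k s' \<le> Suc (potential L k s)"
      using aligned_letter1[OF L Cons.prems(1)] s' by simp
    then show ?thesis
      using Cons.IH[of r s'] \<open>moves (counter_pdfa L) w k s' t\<close> 2 by fastforce
  next
    case 3
    then have "counter_pdfa L (s 0) a = None"
      by (simp add: counter_pdfa_def)
    then show ?thesis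
      using s'[of 0] L by simp
  qed
qed

lemma delta_word_replicate_rotate:
  assumes "0 < L" "q < 4 * L"
  shows "delta_word (counter_pdfa L) q (replicate m 0) = Some (4 * ((q div 4 + m) mod L) + q mod 4)"
  using assms(2)
proof (induction m arbitrary: q)
  case 0
  then show ?case by simp
next
  case (Suc m)
  define q' where "q' = 4 * ((q div 4 + 1) mod L) + q mod 4"
  have "q' < 4 * L"
    unfolding q'_def using assms(1) by (intro four_mul_mod_add_less) auto
  moreover have "q' div 4 = (q div 4 + 1) mod L" "q' mod 4 = q mod 4"
    unfolding q'_def by auto
  ultimately show ?case
    using Suc counter_pdfa_rotate[of q L] by (simp add: q'_def mod_add_left_eq)
qed

definition ba_word :: "nat \<Rightarrow> nat list" where
  "ba_word t = concat (replicate t [1, 0])"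

lemma ba_word_Suc: "ba_word (Suc t) = [1, 0] @ ba_word t"
  by (simp add: ba_word_def)

lemma ba_word_add: "ba_word (t + t') = ba_word t @ ba_word t'"
  by (simp add: ba_word_def replicate_add)

lemma delta_word_ba_word:
  assumes "2 \<le> c" "c < L" "c + t \<le> L" "v < 4"
  shows "delta_word (counter_pdfa L) (4 * c + v) (ba_word t) = Some (4 * ((c + t) mod L) + v)"
  using assms
proof (induction t arbitrary: c)
  case 0
  then show ?case by (simp add: ba_word_def)
next
  case (Suc t)
  then have "counter_pdfa L (4 * c + v) 1 = Some (4 * c + v)"
    "counter_pdfa L (4 * c + v) 0 = Some (4 * ((c + 1) mod L) + v)"
    using counter_pdfa_fix counter_pdfa_rotate[of "4 * c + v" L] by simp_all
  moreover have "delta_word (counter_pdfa L) (4 * ((c + 1) mod L) + v) (ba_word t)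
      = Some (4 * ((c + Suc t) mod L) + v)"
  proof (cases "t = 0")
    case False
    then have "(c + 1) mod L = c + 1"
      using Suc.prems by simp
    moreover have "delta_word (counter_pdfa L) (4 * (c + 1) + v) (ba_word t)
        = Some (4 * ((c + 1 + t) mod L) + v)"
      using Suc.IH[of "c + 1"] Suc.prems False by simp
    ultimately show ?thesis
      by simp
  qed (simp add: ba_word_def)
  ultimately show ?case
    by (simp add: ba_word_Suc)
qed

definition increment_word :: "nat \<Rightarrow> nat \<Rightarrow> nat list" where
  "increment_word L i = ba_word i @ [1] @ replicate (L - i) 0"

lemma ba_word_to_cell0:
  assumes "L = k + 1" "j < k" "v < 4"
  shows "delta_word (counter_pdfa L) (4 * ((L - j) mod L) + v) (ba_word j) = Some v"
proof (cases "j = 0")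
  case True
  then show ?thesis by (simp add: ba_word_def)
next
  case False
  then show ?thesis
    using assms delta_word_ba_word[of "L - j" L j v] by simp
qed

lemma increment_word_above:
  assumes L: "L = k + 1" and "i < j" "j < k" "v < 4"
  shows "delta_word (counter_pdfa L) (4 * (L - j) + v) (increment_word L i) = Some (4 * (L - j) + v)"
proof -
  have "delta_word (counter_pdfa L) (4 * (L - j) + v) (ba_word i) = Some (4 * (L - j + i) + v)"
    using assms delta_word_ba_word[of "L - j" L i v] by simp
  moreover have "counter_pdfa L (4 * (L - j + i) + v) 1 = Some (4 * (L - j + i) + v)"
    using assms by (intro counter_pdfa_fix) auto
  moreover have "delta_word (counter_pdfa L) (4 * (L - j + i) + v) (replicate (L - i) 0)
      = Some (4 * ((L - j + i + (L - i)) mod L) + v)"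
    using assms by (simp add: delta_word_replicate_rotate)
  moreover have "(L - j + i + (L - i)) mod L = L - j"
  proof -
    have "L - j + i + (L - i) = (L - j) + L" "L - j < L"
      using assms by simp_all
    then show ?thesis
      by simp
  qed
  ultimately show ?thesis
    unfolding increment_word_def by (simp add: delta_word_append)
qed

lemma increment_word_at:
  assumes L: "L = k + 1" and "i < k" "v \<le> 2"
  shows "delta_word (counter_pdfa L) (4 * ((L - i) mod L) + v) (increment_word L i)
    = Some (4 * ((L - i) mod L) + (v + 1))"
proof -
  have "delta_word (counter_pdfa L) (4 * ((L - i) mod L) + v) (ba_word i) = Some v"
    using assms by (intro ba_word_to_cell0[OF L]) auto
  moreover have "counter_pdfa L v 1 = Some (v + 1)"
    using assms by (simp add: counter_pdfa_def)
  moreover have "delta_word (counter_pdfa L) (v + 1) (replicate (L - i) 0)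
      = Some (4 * ((L - i) mod L) + (v + 1))"
    using assms delta_word_replicate_rotate[of L "v + 1" "L - i"] by simp
  ultimately show ?thesis
    unfolding increment_word_def by (simp add: delta_word_append)
qed

lemma increment_word_below:
  assumes L: "L = k + 1" and "j < i" "i < k"
  shows "delta_word (counter_pdfa L) (4 * ((L - j) mod L) + 3) (increment_word L i)
    = Some (4 * ((L - j) mod L))"
proof -
  have "delta_word (counter_pdfa L) (4 * ((L - j) mod L) + 3) (ba_word j) = Some 3"
    using assms by (intro ba_word_to_cell0[OF L]) auto
  moreover have "ba_word i = ba_word j @ [1, 0] @ ba_word (i - j - 1)"
  proof -
    have "i = j + Suc (i - j - 1)"
      using assms by simp
    then show ?thesis
      by (metis ba_word_Suc ba_word_add)
  qed
  moreover have "counter_pdfa L 3 1 = Some (4 * L)" "counter_pdfa L (4 * L) 0 = Some (4 * L + 1)"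
    using assms by (simp_all add: counter_pdfa_def)
  moreover have reset: "counter_pdfa L (4 * L + 1) 1 = Some 4"
    using assms by (simp add: counter_pdfa_def)
  moreover have "delta_word (counter_pdfa L) (4 * L + 1) (ba_word (i - j - 1) @ [1] @ replicate (L - i) 0)
      = Some (4 * ((L - j) mod L))"
  proof (cases "i - j - 1")
    case 0
    then have "1 + (L - i) = L - j"
      using assms by simp
    then show ?thesis
      using assms 0 reset delta_word_replicate_rotate[of L 4 "L - i"] by (simp add: ba_word_def)
  next
    case (Suc t)
    have "counter_pdfa L 4 0 = Some (4 * 2)"
      using assms by (simp add: counter_pdfa_def)
    moreover have "delta_word (counter_pdfa L) (4 * 2) (ba_word t) = Some (4 * (i - j))"
      using assms Suc delta_word_ba_word[of 2 L t 0] by simp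
    moreover have "counter_pdfa L (4 * (i - j)) 1 = Some (4 * (i - j))"
      using assms Suc counter_pdfa_fix[of "i - j" L 0] by simp
    moreover have "delta_word (counter_pdfa L) (4 * (i - j)) (replicate (L - i) 0)
        = Some (4 * ((L - j) mod L))"
      using assms delta_word_replicate_rotate[of L "4 * (i - j)" "L - i"] by simp
    ultimately show ?thesis
      using Suc reset by (simp add: ba_word_Suc delta_word_append)
  qed
  ultimately show ?thesis
    unfolding increment_word_def by (simp add: delta_word_append)
qed

definition home_state :: "nat \<Rightarrow> (nat \<Rightarrow> nat) \<Rightarrow> nat \<Rightarrow> nat" where
  "home_state L d j = 4 * ((L - j) mod L) + d j"

lemma increment_moves:
  assumes L: "L = k + 1" and "i < k" and d: "\<And>j. d j < 4" "\<And>j. j < i \<Longrightarrow> d j = 3" "d i < 3"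
    and e: "\<And>j. j < i \<Longrightarrow> e j = 0" "e i = Suc (d i)" "\<And>j. i < j \<Longrightarrow> e j = d j"
  shows "moves (counter_pdfa L) (increment_word L i) k (home_state L d) (home_state L e)"
  unfolding moves_def
proof (intro allI impI)
  fix j assume "j < k"
  consider "j < i" | "j = i" | "i < j"
    by linarith
  then show "delta_word (counter_pdfa L) (home_state L d j) (increment_word L i) = Some (home_state L e j)"
  proof cases
    case 1
    then show ?thesis
      using increment_word_below[OF L 1 \<open>i < k\<close>] d e unfolding home_state_def by simp
  next
    case 2
    then show ?thesis
      using increment_word_at[OF L \<open>i < k\<close>, of "d i"] d e unfolding home_state_def by simp
  next
    case 3
    then have "(L - j) mod L = L - j"
      using L by simp
    then show ?thesis
      using increment_word_above[OF L 3 \<open>j < k\<close> d(1)] 3 e unfolding home_state_def by simp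
  qed
qed

fun count_word :: "nat \<Rightarrow> nat \<Rightarrow> nat list" where
  "count_word L 0 = []"
| "count_word L (Suc i) =
    (let u = count_word L i @ increment_word L i in u @ u @ u @ count_word L i)"

lemma count_word_moves:
  assumes L: "L = k + 1"
  shows "i \<le> k \<Longrightarrow> (\<And>j. d j < 4) \<Longrightarrow> (\<And>j. j < i \<Longrightarrow> d j = 0) \<Longrightarrow>
    moves (counter_pdfa L) (count_word L i) k (home_state L d) (home_state L (\<lambda>j. if j < i then 3 else d j))"
proof (induction i arbitrary: d)
  case 0
  then show ?case
    unfolding moves_def by simp
next
  case (Suc i)
  let ?u = "count_word L i @ increment_word L i"
  have step: "moves (counter_pdfa L) ?u k (home_state L (d(i := c))) (home_state L (d(i := c')))"
    if "c < 3" "c' = c + 1" for c c'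
  proof (rule moves_append)
    show "moves (counter_pdfa L) (count_word L i) k (home_state L (d(i := c)))
        (home_state L (\<lambda>j. if j < i then 3 else (d(i := c)) j))"
      by (rule Suc.IH) (use Suc.prems that in auto)
    show "moves (counter_pdfa L) (increment_word L i) k
        (home_state L (\<lambda>j. if j < i then 3 else (d(i := c)) j)) (home_state L (d(i := c')))"
      using Suc.prems that by (intro increment_moves[OF L]) auto
  qed
  have rounds:
    "moves (counter_pdfa L) ?u k (home_state L (d(i := 0))) (home_state L (d(i := 1)))"
    "moves (counter_pdfa L) ?u k (home_state L (d(i := 1))) (home_state L (d(i := 2)))"
    "moves (counter_pdfa L) ?u k (home_state L (d(i := 2))) (home_state L (d(i := 3)))"
    by (rule step; simp)+
  have "moves (counter_pdfa L) (count_word L i) k (home_state L (d(i := 3)))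
      (home_state L (\<lambda>j. if j < i then 3 else (d(i := 3)) j))"
    by (rule Suc.IH) (use Suc.prems in auto)
  moreover have "(\<lambda>j. if j < i then 3 else (d(i := 3)) j) = (\<lambda>j. if j < Suc i then 3 else d j)"
    by (auto simp: less_Suc_eq)
  ultimately have last: "moves (counter_pdfa L) (count_word L i) k (home_state L (d(i := 3)))
      (home_state L (\<lambda>j. if j < Suc i then 3 else d j))"
    by simp
  moreover have "d(i := 0) = d"
    using Suc.prems by auto
  ultimately show ?case
    using moves_append[OF rounds(1) moves_append[OF rounds(2) moves_append[OF rounds(3) last]]]
    by (simp add: Let_def)
qed

lemma count_word_in_words: "count_word L i \<in> words 2"
  unfolding words_def
  by (induction i) (auto simp: Let_def increment_word_def ba_word_def)

lemma length_ge_four_pow: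
  assumes L: "L = k + 1" "2 \<le> k"
    and w: "moves (counter_pdfa L) w k (home_state L (\<lambda>_. 0)) t"
    and t: "\<And>j. j < k \<Longrightarrow> digit_of L (t j) = 3" "cell_of L (t 0) \<noteq> 0"
  shows "4 ^ k \<le> length w"
proof -
  let ?s = "home_state L (\<lambda>_. 0)"
  have s: "?s j < 4 * L" for j
    unfolding home_state_def using L four_mul_mod_add_less[of 0 L] by simp
  then have "aligned L k 0 ?s"
    unfolding aligned_def by (simp add: less_SucI home_state_def cell_of_def)
  from potential_growth[OF L this w] have "aligned L k (count_list w 0) t"
    and growth: "potential L k t + count_list w 0 \<le> potential L k ?s + length w"
    by simp_all
  then have "count_list w 0 mod L \<noteq> 0"
    using t(2) L(2) unfolding aligned_def by simp
  then have "1 \<le> count_list w 0"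
    by (cases "count_list w 0") auto
  moreover have "potential L k t = (\<Sum>j<k. 3 * 4^j)"
    unfolding potential_def using t(1) by simp
  moreover have "potential L k ?s = 0"
    unfolding potential_def digit_of_def using s by (simp add: home_state_def)
  ultimately show ?thesis
    using growth sum_three_mul_four_pow[of k] by linarith
qed

lemma four_pow_le_max_diam:
  assumes "2 \<le> k" "4 * k + 6 \<le> n"
  shows "4 ^ k \<le> max_diam n 2"
proof -
  define L where "L = k + 1"
  define t where "t j = 4 * (((L - j) mod L + 1) mod L) + 3" for j
  have cells: "4 * (c mod L) + v < 4 * L" if "v < 4" for c v
    using that L_def by (intro four_mul_mod_add_less) auto
  have "moves (counter_pdfa L) (count_word L k) k (home_state L (\<lambda>_. 0))
      (home_state L (\<lambda>j. if j < k then 3 else 0))"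
    using count_word_moves[OF L_def, of k "\<lambda>_. 0"] by simp
  moreover have "moves (counter_pdfa L) [0] k (home_state L (\<lambda>j. if j < k then 3 else 0)) t"
    unfolding moves_def home_state_def t_def using cells[of 3] counter_pdfa_rotate by simp
  ultimately have "moves (counter_pdfa L) (count_word L k @ [0]) k (home_state L (\<lambda>_. 0)) t"
    by (rule moves_append)
  then show ?thesis
  proof (rule le_max_diam_if_moves[rotated 3])
    show "wf_pdfa n 2 (counter_pdfa L)"
      using assms L_def by (intro wf_counter_pdfa) auto
    show "count_word L k @ [0] \<in> words 2"
      using count_word_in_words[of L k] by (simp add: words_def)
    show "home_state L (\<lambda>_. 0) j < n" for j
      using cells[of 0 "L - j"] assms L_def by (simp add: home_state_def)
    show "4 ^ k \<le> length w" if "moves (counter_pdfa L) w k (home_state L (\<lambda>_. 0)) t" for w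
    proof (rule length_ge_four_pow[OF L_def assms(1) that])
      show "digit_of L (t j) = 3" for j
        unfolding digit_of_def t_def using cells by simp
      show "cell_of L (t 0) \<noteq> 0"
        unfolding t_def cell_of_def using L_def assms(1) by simp
    qed
  qed
qed

theorem corollary1:
  fixes n k :: nat
  assumes "n \<ge> 9" and "0 < k" and "n = 5 * k + 4"
  shows "real (max_diam n 2) \<ge> 4 powr ((real n - 4) / 5)"
proof -
  have "4 ^ k \<le> max_diam n 2"
  proof (cases "k = 1")
    case True
    then show ?thesis
      using pred_le_max_diam[of 2 n] assms(3) by simp
  next
    case False
    then show ?thesis
      using four_pow_le_max_diam[of k n] assms(2,3) by simp
  qed
  moreover have "(real n - 4) / 5 = real k"
    using assms(3) by simp
  ultimately show ?thesis
    by (simp add: powr_realpow flip: of_nat_le_iff)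
qed

end
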